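(* Let $k\in\mathbb{Z}$ and $\imath,q\in\mathbb{Z}_{>1}$. The rational polygon $\mathrm{conv}((0,0),(k,\imath),(k+1/q,\imath))$ is canonical if and only if there is an integer $c$ with $0<c<q$ and $kc\equiv-1\bmod \imath$.
   Context: For rationals $a<b$ and $\imath\in\mathbb{Z}_{>1}$, the polygon $\mathrm{conv}((0,0),(a,\imath),(b,\imath))$ is $\mathbb{Q}$-Gorenstein of index $\imath$ (with $\alpha=(0,1)$), and it is called canonical if every lattice point $p\neq(0,0)$ in it satisfies $p_2=\imath$, i.e. it contains no lattice point $p$ with $0<p_2<\imath$. *)

theory Defs
  imports "HOL-Analysis.Analysis" "HOL-Number_Theory.Cong"
begin

definition tri_polygon :: "rat \<Rightarrow> rat \<Rightarrow> int \<Rightarrow> (real \<times> real) set" where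
  "tri_polygon a b i = convex hull {(0, 0), (of_rat a, of_int i), (of_rat b, of_int i)}"

definition canonical_tri :: "rat \<Rightarrow> rat \<Rightarrow> int \<Rightarrow> bool" where
  "canonical_tri a b i \<longleftrightarrow>
     (\<forall>x y :: int. (real_of_int x, real_of_int y) \<in> tri_polygon a b i \<and> (x, y) \<noteq> (0, 0) \<longrightarrow> y = i)"

end

theory Submission
  imports Defs
begin

text \<open>A lattice point \<open>(x, y)\<close> with \<open>r = x i - k y\<close> lies in the triangle iff \<open>0 \<le> y \<le> i\<close> and
  \<open>0 \<le> q r \<le> y\<close>. If \<open>k c \<equiv> -1 (mod i)\<close> then \<open>y \<equiv> r c (mod i)\<close>, so a point with \<open>0 < y < i\<close>
  would satisfy \<open>y \<le> r c < r q \<le> y\<close> (or \<open>r = 0\<close> and \<open>y \<equiv> 0\<close>). Conversely, if \<open>k\<close> and \<open>i\<close>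
  share a factor there is a point with \<open>r = 0\<close> and \<open>0 < y < i\<close>; otherwise the representative
  \<open>c \<in> (0, i)\<close> of \<open>-k\<^sup>-\<^sup>1\<close> gives a point with \<open>r = 1\<close> and \<open>y = c\<close>, which is excluded only if
  \<open>c < q\<close>.\<close>

lemma mem_convex_hull_apex_triangle:
  fixes a b h X Y :: real
  assumes h: "h > 0" and ab: "a < b"
  shows "(X, Y) \<in> convex hull {(0, 0), (a, h), (b, h)} \<longleftrightarrow>
         0 \<le> Y \<and> Y \<le> h \<and> a * Y \<le> X * h \<and> X * h \<le> b * Y"
proof
  assume "(X, Y) \<in> convex hull {(0, 0), (a, h), (b, h)}"
  then obtain u v w where uvw: "0 \<le> u" "0 \<le> v" "0 \<le> w" "u + v + w = 1"
    and e: "(X, Y) = u *\<^sub>R (0, 0) + v *\<^sub>R (a, h) + w *\<^sub>R (b, h)"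
    unfolding convex_hull_3 by blast
  have X: "X = v * a + w * b" and Y: "Y = (v + w) * h"
    using e by (auto simp: algebra_simps)
  have "a * Y \<le> X * h" "X * h \<le> b * Y"
    unfolding X Y using uvw ab h by (simp_all add: algebra_simps mult_right_mono mult_left_mono)
  moreover have "0 \<le> Y" "Y \<le> h"
    unfolding Y using uvw h by auto
  ultimately show "0 \<le> Y \<and> Y \<le> h \<and> a * Y \<le> X * h \<and> X * h \<le> b * Y"
    by auto
next
  assume bounds: "0 \<le> Y \<and> Y \<le> h \<and> a * Y \<le> X * h \<and> X * h \<le> b * Y"
  define t where "t = Y / h"
  define w where "w = (X - a * t) / (b - a)"
  define v where "v = t - w"
  have t: "0 \<le> t" "t \<le> 1" "a * t \<le> X" "X \<le> b * t"
    using bounds h by (auto simp: t_def field_simps)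
  have "w * (b - a) = X - a * t"
    using ab by (simp add: w_def)
  then have X: "X = v * a + w * b"
    by (simp add: v_def algebra_simps)
  have Y: "Y = v * h + w * h"
    using h by (simp add: v_def t_def field_simps)
  have "0 \<le> w" "w \<le> t"
    using t ab by (simp_all add: w_def field_simps)
  with X Y show "(X, Y) \<in> convex hull {(0, 0), (a, h), (b, h)}"
    unfolding convex_hull_3 using t
    by (intro CollectI exI[of _ "1 - t"] exI[of _ v] exI[of _ w]) (auto simp: v_def)
qed

lemma lattice_point_in_tri_polygon_iff:
  fixes k i q x y :: int
  assumes "i > 1" and "q > 1"
  shows "(real_of_int x, real_of_int y) \<in> tri_polygon (of_int k) (of_int k + 1 / of_int q) i
     \<longleftrightarrow> 0 \<le> y \<and> y \<le> i \<and> 0 \<le> x * i - k * y \<and> q * (x * i - k * y) \<le> y"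
proof -
  have q: "real_of_int q > 0"
    using assms by simp
  have right_end: "of_rat (of_int k + 1 / of_int q) = real_of_int k + 1 / real_of_int q"
    by (simp add: of_rat_add of_rat_divide)
  have "(real_of_int x, real_of_int y) \<in> tri_polygon (of_int k) (of_int k + 1 / of_int q) i
     \<longleftrightarrow> 0 \<le> real_of_int y \<and> real_of_int y \<le> real_of_int i \<and>
         real_of_int k * real_of_int y \<le> real_of_int x * real_of_int i \<and>
         real_of_int q * (real_of_int x * real_of_int i - real_of_int k * real_of_int y)
           \<le> real_of_int y"
    unfolding tri_polygon_def right_end using assms q
    by (subst mem_convex_hull_apex_triangle) (auto simp: field_simps)
  also have "\<dots> \<longleftrightarrow> 0 \<le> y \<and> y \<le> i \<and> 0 \<le> x * i - k * y \<and> q * (x * i - k * y) \<le> y"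
    by (metis of_int_le_iff of_int_mult of_int_diff of_int_0_le_iff diff_ge_0_iff_ge)
  finally show ?thesis .
qed

definition low_lattice_point :: "int \<Rightarrow> int \<Rightarrow> int \<Rightarrow> int \<Rightarrow> int \<Rightarrow> bool" where
  "low_lattice_point k i q x y \<longleftrightarrow>
     0 < y \<and> y < i \<and> 0 \<le> x * i - k * y \<and> q * (x * i - k * y) \<le> y"

lemma canonical_tri_iff_no_low_lattice_point:
  fixes k i q :: int
  assumes "i > 1" and "q > 1"
  shows "canonical_tri (of_int k) (of_int k + 1 / of_int q) i \<longleftrightarrow>
         \<not> (\<exists>x y. low_lattice_point k i q x y)"
proof -
  have bottom_vertex_only: "x = 0" if "0 \<le> x * i" "q * (x * i) \<le> 0" for x
  proof -
    have "\<not> 0 < x * i"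
      using that(2) assms(2) mult_pos_pos[of q "x * i"] by linarith
    then have "x * i = 0"
      using that(1) by linarith
    then show ?thesis
      using assms(1) by simp
  qed
  show ?thesis
    unfolding canonical_tri_def lattice_point_in_tri_polygon_iff[OF assms]
  proof (intro iffI notI)
    assume canonical: "\<forall>x y. (0 \<le> y \<and> y \<le> i \<and> 0 \<le> x * i - k * y \<and> q * (x * i - k * y) \<le> y)
        \<and> (x, y) \<noteq> (0, 0) \<longrightarrow> y = i"
      and "\<exists>x y. low_lattice_point k i q x y"
    then obtain x y where low: "low_lattice_point k i q x y"
      by blast
    then have "y = i"
      using spec[OF spec[OF canonical, of x], of y] by (simp add: low_lattice_point_def)
    with low show False
      by (simp add: low_lattice_point_def)
  next
    assume no_low: "\<not> (\<exists>x y. low_lattice_point k i q x y)"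
    show "\<forall>x y. (0 \<le> y \<and> y \<le> i \<and> 0 \<le> x * i - k * y \<and> q * (x * i - k * y) \<le> y)
        \<and> (x, y) \<noteq> (0, 0) \<longrightarrow> y = i"
    proof (intro allI impI)
      fix x y
      assume point: "(0 \<le> y \<and> y \<le> i \<and> 0 \<le> x * i - k * y \<and> q * (x * i - k * y) \<le> y)
          \<and> (x, y) \<noteq> (0, 0)"
      show "y = i"
      proof (rule ccontr)
        assume "y \<noteq> i"
        moreover have "y \<noteq> 0"
          using point bottom_vertex_only[of x] by auto
        ultimately have "low_lattice_point k i q x y"
          using point by (auto simp: low_lattice_point_def)
        with no_low show False
          by blast
      qed
    qed
  qed
qed

lemma low_lattice_point_if_not_coprime:
  fixes k i q :: int
  assumes "i > 1" and "\<not> coprime k i"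
  obtains x y where "low_lattice_point k i q x y"
proof -
  define g where "g = gcd k i"
  have "g \<noteq> 1"
    using assms(2) by (simp add: g_def coprime_iff_gcd_eq_1)
  then have g: "g > 1"
    using assms(1) gcd_ge_0_int[of k i] gcd_eq_0_iff[of k i] unfolding g_def by linarith
  obtain a where a: "i = g * a"
    unfolding g_def by (meson gcd_dvd2 dvdE)
  obtain b where b: "k = g * b"
    unfolding g_def by (meson gcd_dvd1 dvdE)
  have "0 < g * a"
    using a assms(1) by simp
  then have "0 < a"
    using g by (simp add: zero_less_mult_iff)
  moreover have "a < i"
    using a g \<open>0 < a\<close> by (simp add: mult_strict_right_mono[of 1 g a, simplified])
  moreover have "b * i - k * a = 0"
    using a b by simp
  ultimately have "low_lattice_point k i q b a"
    by (simp add: low_lattice_point_def)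
  then show thesis
    by (rule that)
qed

lemma exists_pos_residue_cong_neg_one:
  fixes k i :: int
  assumes "i > 1" and "coprime k i"
  obtains c where "0 < c" "c < i" "[k * c = -1] (mod i)"
proof -
  obtain u where u: "[k * u = 1] (mod i)"
    using cong_solve_int[of k i] assms(2) by (auto simp: coprime_iff_gcd_eq_1)
  define c where "c = (- u) mod i"
  have "[k * c = k * (- u)] (mod i)"
    unfolding c_def by (intro cong_scalar_left) (simp add: cong_def)
  moreover have "[k * (- u) = -1] (mod i)"
    using u by (simp add: cong_minus_minus_iff)
  ultimately have kc: "[k * c = -1] (mod i)"
    by (rule cong_trans)
  have "c \<noteq> 0"
  proof
    assume "c = 0"
    with kc have "i dvd 1"
      by (simp add: cong_iff_dvd_diff)
    with assms(1) show False
      by simp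
  qed
  moreover have "0 \<le> c" "c < i"
    using assms(1) unfolding c_def by auto
  ultimately show thesis
    using kc by (intro that) simp_all
qed

lemma low_lattice_point_at_residue:
  fixes k i q c :: int
  assumes kc: "[k * c = -1] (mod i)" and c: "0 < c" "c < i" "q \<le> c"
  obtains x where "low_lattice_point k i q x c"
proof -
  have "i dvd k * c + 1"
    using kc by (simp add: cong_iff_dvd_diff)
  then obtain x where "k * c + 1 = i * x"
    by (rule dvdE)
  then have "x * i - k * c = 1"
    by (simp add: algebra_simps)
  with c have "low_lattice_point k i q x c"
    by (simp add: low_lattice_point_def)
  then show thesis
    by (rule that)
qed

lemma no_low_lattice_point_if_cong:
  fixes k i q c x y :: int
  assumes kc: "[k * c = -1] (mod i)" and c: "0 < c" "c < q"
  shows "\<not> low_lattice_point k i q x y"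
proof
  assume "low_lattice_point k i q x y"
  then have y: "0 < y" "y < i" and bounds: "0 \<le> x * i - k * y" "q * (x * i - k * y) \<le> y"
    by (simp_all add: low_lattice_point_def)
  define r where "r = x * i - k * y"
  have r: "0 \<le> r" "q * r \<le> y"
    using bounds by (simp_all add: r_def)
  have "y - r * c = y * (k * c + 1) - x * i * c"
    unfolding r_def by (simp add: algebra_simps)
  moreover have "i dvd (k * c + 1)"
    using kc by (simp add: cong_iff_dvd_diff)
  ultimately have "i dvd (y - r * c)"
    by simp
  then have "y mod i = (r * c) mod i"
    by (simp add: mod_eq_dvd_iff)
  then have y_eq: "y = (r * c) mod i"
    using y by simp
  show False
  proof (cases "r = 0")
    case True
    then show False
      using y_eq y by simp
  next
    case False
    with r have "r > 0"
      by simp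
    then have "(r * c) mod i \<le> r * c"
      using c y by (simp add: zmod_le_nonneg_dividend)
    moreover have "r * c < q * r"
      using \<open>r > 0\<close> c by simp
    ultimately show False
      using y_eq r by simp
  qed
qed

theorem mainTheorem7:
  fixes k i q :: int
  assumes "i > 1" and "q > 1"
  shows "canonical_tri (of_int k) (of_int k + 1 / of_int q) i \<longleftrightarrow>
         (\<exists>c :: int. 0 < c \<and> c < q \<and> [k * c = -1] (mod i))"
  unfolding canonical_tri_iff_no_low_lattice_point[OF assms]
proof
  assume no_low: "\<not> (\<exists>x y. low_lattice_point k i q x y)"
  then have "coprime k i"
    using low_lattice_point_if_not_coprime[OF assms(1)] by blast
  then obtain c where c: "0 < c" "c < i" "[k * c = -1] (mod i)"
    using exists_pos_residue_cong_neg_one assms(1) by blast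
  moreover have "c < q"
    using low_lattice_point_at_residue[OF c(3,1,2)] no_low by (meson not_le)
  ultimately show "\<exists>c. 0 < c \<and> c < q \<and> [k * c = -1] (mod i)"
    by blast
next
  assume "\<exists>c. 0 < c \<and> c < q \<and> [k * c = -1] (mod i)"
  then show "\<not> (\<exists>x y. low_lattice_point k i q x y)"
    using no_low_lattice_point_if_cong by blast
qed

end
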